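(* Let $\langle E,\rightarrow\rangle$ be a computation, $b_1,b_2$ regular predicates and $b=b_1\wedge b_2$. The graph $S_{\min}(E)$ has the same set of consistent cuts as the slice of $\langle E,\rightarrow\rangle$ with respect to $b$.
   Context: A computation is a directed graph $\langle E, \rightarrow\rangle$ whose vertices (events) are partitioned among processes $p_1,\dots,p_n$; events on each process are totally ordered, each process has an initial event and a final event, the path relation contains Lamport's happened-before relation, and all initial (resp. final) events lie in one strongly connected component. $\top$ is the set of final events and $\mathrm{succ}(e)$ the successor of $e$ on its process. A vertex subset $C$ is a consistent cut if for every edge $(u,v)$, $v\in C$ implies $u\in C$. A predicate is regular if whenever consistent cuts $C_1,C_2$ satisfy it, so do $C_1\cap C_2$ and $C_1\cup C_2$. The slice with respect to a predicate $c$ is a directed graph on $E$ whose consistent cuts include every consistent cut satisfying $c$ and which has the fewest consistent cuts among all such graphs. $F_c(e)[i]$ is the earliest event on $p_i$ reachable from $e$ in the slice with respect to $c$. $F_{\min}(e)[i]$ is whichever of $F_{b_1}(e)[i]$, $F_{b_2}(e)[i]$ occurs earlier on $p_i$. $S_{\min}(E)$ is the directed graph on $E$ with edges from each $e\notin\top$ to $\mathrm{succ}(e)$ and from each $e$ to $F_{\min}(e)[i]$ for every $i$. *)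

theory Defs
  imports Main
begin

text \<open>Events are pairs (i,k): the k-th event of process i (processes 0..n-1,
  process i has events 0..m i; (i,0) is initial, (i, m i) is final).\<close>

type_synonym event = "nat \<times> nat"

definition events :: "nat \<Rightarrow> (nat \<Rightarrow> nat) \<Rightarrow> event set" where
  "events n m = {(i,k). i < n \<and> k \<le> m i}"

definition final_events :: "nat \<Rightarrow> (nat \<Rightarrow> nat) \<Rightarrow> event set" where
  "final_events n m = {(i, m i) | i. i < n}"

definition succ_ev :: "event \<Rightarrow> event" where
  "succ_ev e = (fst e, Suc (snd e))"

definition computation :: "nat \<Rightarrow> (nat \<Rightarrow> nat) \<Rightarrow> event rel \<Rightarrow> bool" where
  "computation n m R \<longleftrightarrow>
     0 < n \<and>
     R \<subseteq> events n m \<times> events n m \<and>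
     (\<forall>i<n. \<forall>k<m i. ((i,k),(i,Suc k)) \<in> R\<^sup>+) \<and>
     (\<forall>i<n. \<forall>j<n. ((i,0),(j,0)) \<in> R\<^sup>*) \<and>
     (\<forall>i<n. \<forall>j<n. ((i, m i),(j, m j)) \<in> R\<^sup>*)"

definition consistent_cut :: "'a set \<Rightarrow> 'a rel \<Rightarrow> 'a set \<Rightarrow> bool" where
  "consistent_cut E R C \<longleftrightarrow> C \<subseteq> E \<and> (\<forall>(u,v)\<in>R. v \<in> C \<longrightarrow> u \<in> C)"

definition cuts :: "'a set \<Rightarrow> 'a rel \<Rightarrow> 'a set set" where
  "cuts E R = {C. consistent_cut E R C}"

definition regular :: "'a set \<Rightarrow> 'a rel \<Rightarrow> ('a set \<Rightarrow> bool) \<Rightarrow> bool" where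
  "regular E R b \<longleftrightarrow>
     (\<forall>C1 C2. consistent_cut E R C1 \<and> consistent_cut E R C2 \<and> b C1 \<and> b C2
        \<longrightarrow> b (C1 \<inter> C2) \<and> b (C1 \<union> C2))"

definition is_slice :: "'a set \<Rightarrow> 'a rel \<Rightarrow> ('a set \<Rightarrow> bool) \<Rightarrow> 'a rel \<Rightarrow> bool" where
  "is_slice E R c S \<longleftrightarrow>
     S \<subseteq> E \<times> E \<and>
     {C. consistent_cut E R C \<and> c C} \<subseteq> cuts E S \<and>
     (\<forall>S'. S' \<subseteq> E \<times> E \<and> {C. consistent_cut E R C \<and> c C} \<subseteq> cuts E S'
        \<longrightarrow> card (cuts E S) \<le> card (cuts E S'))"

definition F_reach :: "(nat \<Rightarrow> nat) \<Rightarrow> event rel \<Rightarrow> event \<Rightarrow> nat \<Rightarrow> event" where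
  "F_reach m S e i = (i, LEAST k. k \<le> m i \<and> (e, (i,k)) \<in> S\<^sup>*)"

definition F_min :: "(nat \<Rightarrow> nat) \<Rightarrow> event rel \<Rightarrow> event rel \<Rightarrow> event \<Rightarrow> nat \<Rightarrow> event" where
  "F_min m S1 S2 e i = (i, min (snd (F_reach m S1 e i)) (snd (F_reach m S2 e i)))"

definition S_min :: "nat \<Rightarrow> (nat \<Rightarrow> nat) \<Rightarrow> event rel \<Rightarrow> event rel \<Rightarrow> event rel" where
  "S_min n m S1 S2 =
     {(e, succ_ev e) | e. e \<in> events n m \<and> e \<notin> final_events n m} \<union>
     {(e, F_min m S1 S2 e i) | e i. e \<in> events n m \<and> i < n}"

end

theory Submission
  imports Defs
begin

(* Over a finite carrier E, a family of subsets that contains {} and E and is closed under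
   union and intersection is the set of cuts of the relation "every member containing v contains
   u" (each cut is the union of the least members containing its elements).  Minimality therefore
   forces the cuts of a slice for a regular predicate to be exactly the satisfying consistent cuts
   together with {} and E, so the slice for b1 \<and> b2 has as cuts the common cuts of S1 and S2.
   A cut of S_min is a cut of S1 (and of S2): it is closed along processes by the successor edges,
   and F_min(u)[i] lies at or below every S1-successor of u on process i.  Conversely a common cut
   of S1 and S2 is a consistent cut of the computation, hence closed along processes, and it
   contains u as soon as it contains F_min(u)[i], which is reachable from u in S1 or in S2
   (the LEAST in F_reach is attained: the final event of process i is reachable from every event,
   because E is the only cut containing it). *)

lemma consistent_cut_rtrancl_closed:
  assumes "consistent_cut E R C" "(u,v) \<in> R\<^sup>*" "v \<in> C"
  shows "u \<in> C"
proof -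
  have "v \<in> C \<longrightarrow> u \<in> C" using assms(2)
    by (induction rule: converse_rtrancl_induct) (use assms(1) in \<open>auto simp: consistent_cut_def\<close>)
  then show ?thesis using assms(3) by simp
qed

lemma consistent_cut_edge:
  "consistent_cut E R C \<Longrightarrow> (u,v) \<in> R \<Longrightarrow> v \<in> C \<Longrightarrow> u \<in> C"
  by (auto simp: consistent_cut_def)

lemma consistent_cut_trancl:
  assumes "consistent_cut E R C"
  shows "consistent_cut E (R\<^sup>+) C"
proof -
  have "u \<in> C" if "(u,v) \<in> R\<^sup>+" "v \<in> C" for u v
    using consistent_cut_rtrancl_closed[OF assms trancl_into_rtrancl[OF that(1)] that(2)] .
  then show ?thesis using assms by (auto simp: consistent_cut_def)
qed

lemma empty_mem_cuts: "{} \<in> cuts E R"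
  by (simp add: cuts_def consistent_cut_def)

lemma carrier_mem_cuts: "R \<subseteq> E \<times> E \<Longrightarrow> E \<in> cuts E R"
  by (auto simp: cuts_def consistent_cut_def)

lemma rtrancl_if_cuts_closed:
  assumes "R \<subseteq> E \<times> E" "u \<in> E" "v \<in> E"
    and "\<And>C. C \<in> cuts E R \<Longrightarrow> v \<in> C \<Longrightarrow> u \<in> C"
  shows "(u,v) \<in> R\<^sup>*"
proof -
  define below_v where "below_v = {w \<in> E. (w,v) \<in> R\<^sup>*}"
  have "below_v \<in> cuts E R"
    using assms(1) by (auto simp: below_v_def cuts_def consistent_cut_def
        intro: converse_rtrancl_into_rtrancl)
  moreover have "v \<in> below_v" using assms(3) by (simp add: below_v_def)
  ultimately have "u \<in> below_v" using assms(4) by blast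
  then show ?thesis by (simp add: below_v_def)
qed

lemma finite_Inter_Union_mem:
  assumes closed: "\<And>A B. A \<in> L \<Longrightarrow> B \<in> L \<Longrightarrow> A \<inter> B \<in> L \<and> A \<union> B \<in> L"
    and "{} \<in> L" "E \<in> L" "L \<subseteq> Pow E" "finite F" "F \<subseteq> L"
  shows "E \<inter> \<Inter>F \<in> L \<and> \<Union>F \<in> L"
  using \<open>finite F\<close> \<open>F \<subseteq> L\<close>
proof (induction F rule: finite_induct)
  case empty
  then show ?case using assms(2,3) by simp
next
  case (insert A F)
  then have "A \<in> L" "A \<subseteq> E" "E \<inter> \<Inter>F \<in> L" "\<Union>F \<in> L" using assms(4) by auto
  moreover have "E \<inter> \<Inter>(insert A F) = A \<inter> (E \<inter> \<Inter>F)" using \<open>A \<subseteq> E\<close> by auto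
  ultimately show ?case using closed by simp
qed

lemma lattice_eq_cuts:
  assumes "finite E" "L \<subseteq> Pow E" "{} \<in> L" "E \<in> L"
    and closed: "\<And>A B. A \<in> L \<Longrightarrow> B \<in> L \<Longrightarrow> A \<inter> B \<in> L \<and> A \<union> B \<in> L"
  shows "\<exists>S \<subseteq> E \<times> E. cuts E S = L"
proof (intro exI conjI)
  define S where "S = {(u,v). u \<in> E \<and> v \<in> E \<and> (\<forall>C\<in>L. v \<in> C \<longrightarrow> u \<in> C)}"
  show "S \<subseteq> E \<times> E" by (auto simp: S_def)
  have "finite L" using assms(1,2) by (simp add: finite_subset)
  note closure = finite_Inter_Union_mem[OF closed assms(3,4,2)]
  show "cuts E S = L"
  proof
    show "L \<subseteq> cuts E S" using assms(2) by (auto simp: cuts_def consistent_cut_def S_def)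
    show "cuts E S \<subseteq> L"
    proof
      fix D assume "D \<in> cuts E S"
      then have "D \<subseteq> E" and D_closed: "\<And>u v. (u,v) \<in> S \<Longrightarrow> v \<in> D \<Longrightarrow> u \<in> D"
        by (auto simp: cuts_def consistent_cut_def)
      define J where "J v = E \<inter> \<Inter>{C \<in> L. v \<in> C}" for v
      have "J v \<in> L" for v using closure[of "{C \<in> L. v \<in> C}"] \<open>finite L\<close> by (simp add: J_def)
      moreover have "J v \<subseteq> D" if "v \<in> D" for v
        using that \<open>D \<subseteq> E\<close> D_closed by (auto simp: J_def S_def)
      moreover have "v \<in> J v" if "v \<in> D" for v using that \<open>D \<subseteq> E\<close> by (auto simp: J_def)
      ultimately have "D = \<Union>(J ` D)" "J ` D \<subseteq> L" by blast+
      moreover have "finite (J ` D)" using \<open>D \<subseteq> E\<close> assms(1) by (simp add: finite_subset)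
      ultimately show "D \<in> L" using closure[of "J ` D"] by simp
    qed
  qed
qed

lemma regular_cuts_Int_Un_closed:
  assumes "regular E R c"
    and "A \<in> {C \<in> cuts E R. c C} \<union> {{}, E}" "B \<in> {C \<in> cuts E R. c C} \<union> {{}, E}"
  shows "A \<inter> B \<in> {C \<in> cuts E R. c C} \<union> {{}, E} \<and> A \<union> B \<in> {C \<in> cuts E R. c C} \<union> {{}, E}"
proof (cases "A \<in> {{}, E} \<or> B \<in> {{}, E}")
  case True
  have "A \<subseteq> E" "B \<subseteq> E" using assms(2,3) by (auto simp: cuts_def consistent_cut_def)
  with True show ?thesis using assms(2,3) by (auto simp: Int_absorb1 Int_absorb2 Un_absorb1 Un_absorb2)
next
  case False
  then have "consistent_cut E R A" "consistent_cut E R B" "c A" "c B"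
    using assms(2,3) by (auto simp: cuts_def)
  moreover from this(1,2) have "consistent_cut E R (A \<inter> B)" "consistent_cut E R (A \<union> B)"
    by (auto simp: consistent_cut_def)
  ultimately show ?thesis using assms(1) by (simp add: cuts_def regular_def)
qed

lemma finite_cuts: "finite E \<Longrightarrow> finite (cuts E R)"
  by (rule finite_subset[of _ "Pow E"]) (auto simp: cuts_def consistent_cut_def)

lemma slice_cuts:
  assumes "finite E" "regular E R c" "is_slice E R c S"
  shows "cuts E S = {C \<in> cuts E R. c C} \<union> {{}, E}"
proof -
  define L where "L = {C \<in> cuts E R. c C} \<union> {{}, E}"
  have L_Pow: "L \<subseteq> Pow E" by (auto simp: L_def cuts_def consistent_cut_def)
  have "{} \<in> L" "E \<in> L" by (simp_all add: L_def)
  then obtain S' where "S' \<subseteq> E \<times> E" "cuts E S' = L"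
    using lattice_eq_cuts[OF assms(1) L_Pow] regular_cuts_Int_Un_closed[OF assms(2)]
    unfolding L_def by blast
  moreover have "{C. consistent_cut E R C \<and> c C} \<subseteq> L" by (auto simp: L_def cuts_def)
  moreover have "card (cuts E S) \<le> card (cuts E S')"
    if "S' \<subseteq> E \<times> E" "{C. consistent_cut E R C \<and> c C} \<subseteq> cuts E S'" for S'
    using assms(3) that unfolding is_slice_def by blast
  ultimately have "card (cuts E S) \<le> card L" by metis
  moreover have "L \<subseteq> cuts E S"
  proof -
    have "S \<subseteq> E \<times> E" "{C. consistent_cut E R C \<and> c C} \<subseteq> cuts E S"
      using assms(3) by (simp_all add: is_slice_def)
    then show ?thesis using empty_mem_cuts carrier_mem_cuts by (auto simp: L_def cuts_def)
  qed
  ultimately have "L = cuts E S" using card_seteq[OF finite_cuts[OF assms(1)]] by blast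
  then show ?thesis by (simp add: L_def)
qed

lemma finite_events: "finite (events n m)"
proof -
  have "events n m = Sigma {..<n} (\<lambda>i. {..m i})" by (auto simp: events_def)
  then show ?thesis by simp
qed

lemma cut_closed_along_process:
  assumes cut: "consistent_cut (events n m) G D"
    and process_edge: "\<And>i k. i < n \<Longrightarrow> k < m i \<Longrightarrow> ((i,k),(i,Suc k)) \<in> G"
    and "(i,k) \<in> D" "k' \<le> k"
  shows "(i,k') \<in> D"
  using assms(3,4)
proof (induction k)
  case 0
  then show ?case by simp
next
  case (Suc k)
  show ?case
  proof (cases "k' = Suc k")
    case False
    have "(i, Suc k) \<in> events n m" using Suc.prems(1) cut by (auto simp: consistent_cut_def)
    then have "((i,k),(i,Suc k)) \<in> G" using process_edge by (simp add: events_def)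
    then have "(i,k) \<in> D" using Suc.prems(1) cut by (auto simp: consistent_cut_def)
    then show ?thesis using Suc False by simp
  qed (use Suc.prems in simp)
qed

lemma computation_cut_closed_along_process:
  assumes "computation n m R" "consistent_cut (events n m) R D" "(i,k) \<in> D" "k' \<le> k"
  shows "(i,k') \<in> D"
proof (rule cut_closed_along_process[OF consistent_cut_trancl[OF assms(2)] _ assms(3,4)])
  show "((i,k),(i,Suc k)) \<in> R\<^sup>+" if "i < n" "k < m i" for i k
    using assms(1) that by (simp add: computation_def)
qed

lemma computation_cut_final:
  assumes comp: "computation n m R" and cut: "consistent_cut (events n m) R C"
    and "i < n" "(i, m i) \<in> C"
  shows "C = events n m"
proof
  show "C \<subseteq> events n m" using cut by (simp add: consistent_cut_def)
  show "events n m \<subseteq> C"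
  proof
    fix x assume "x \<in> events n m"
    then obtain j k where x: "x = (j,k)" "j < n" "k \<le> m j" by (auto simp: events_def)
    then have "((j, m j),(i, m i)) \<in> R\<^sup>*" using comp \<open>i < n\<close> by (simp add: computation_def)
    then have "(j, m j) \<in> C" using consistent_cut_rtrancl_closed[OF cut] \<open>(i, m i) \<in> C\<close> by blast
    then show "x \<in> C" using computation_cut_closed_along_process[OF comp cut] x by blast
  qed
qed

lemma computation_slice_cuts_subset:
  assumes "computation n m R" "regular (events n m) R c" "is_slice (events n m) R c S"
  shows "cuts (events n m) S \<subseteq> cuts (events n m) R"
proof -
  have "R \<subseteq> events n m \<times> events n m" using assms(1) by (simp add: computation_def)
  then have "{{}, events n m} \<subseteq> cuts (events n m) R" using empty_mem_cuts carrier_mem_cuts by blast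
  then show ?thesis unfolding slice_cuts[OF finite_events assms(2,3)] by blast
qed

lemma reaches_final_if_cuts_subset:
  assumes comp: "computation n m R" and "S \<subseteq> events n m \<times> events n m"
    and "cuts (events n m) S \<subseteq> cuts (events n m) R"
    and "e \<in> events n m" "i < n"
  shows "(e, (i, m i)) \<in> S\<^sup>*"
proof (rule rtrancl_if_cuts_closed[OF assms(2,4)])
  show "(i, m i) \<in> events n m" using \<open>i < n\<close> by (simp add: events_def)
  fix C assume "C \<in> cuts (events n m) S" "(i, m i) \<in> C"
  then have "C = events n m"
    using computation_cut_final[OF comp] assms(3) \<open>i < n\<close> by (auto simp: cuts_def)
  then show "e \<in> C" using \<open>e \<in> events n m\<close> by simp
qed

lemma F_reach_reachable:
  assumes "(e, (i, m i)) \<in> S\<^sup>*"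
  shows "(e, F_reach m S e i) \<in> S\<^sup>*"
proof -
  have "(e, (i, LEAST k. k \<le> m i \<and> (e,(i,k)) \<in> S\<^sup>*)) \<in> S\<^sup>*"
    using LeastI[of "\<lambda>k. k \<le> m i \<and> (e,(i,k)) \<in> S\<^sup>*" "m i"] assms by simp
  then show ?thesis by (simp add: F_reach_def)
qed

lemma F_reach_least:
  assumes "k \<le> m i" "(e, (i,k)) \<in> S\<^sup>*"
  shows "snd (F_reach m S e i) \<le> k"
  using assms by (simp add: F_reach_def Least_le)

lemma cut_F_reach_closed:
  assumes "computation n m R" "S \<subseteq> events n m \<times> events n m"
    and "cuts (events n m) S \<subseteq> cuts (events n m) R"
    and "consistent_cut (events n m) S D" "u \<in> events n m" "i < n" "F_reach m S u i \<in> D"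
  shows "u \<in> D"
  using consistent_cut_rtrancl_closed[OF assms(4) F_reach_reachable assms(7)]
    reaches_final_if_cuts_subset[OF assms(1-3,5,6)] .

lemma F_min_cases: "F_min m S1 S2 e i \<in> {F_reach m S1 e i, F_reach m S2 e i}"
  by (simp add: F_min_def F_reach_def min_def)

lemma S_min_commute: "S_min n m S1 S2 = S_min n m S2 S1"
  by (simp add: S_min_def F_min_def min.commute)

lemma S_min_process_edge:
  assumes "i < n" "k < m i"
  shows "((i,k),(i,Suc k)) \<in> S_min n m S1 S2"
proof -
  have "(i,k) \<in> events n m" "(i,k) \<notin> final_events n m"
    using assms by (auto simp: events_def final_events_def)
  then show ?thesis by (auto simp: S_min_def succ_ev_def)
qed

lemma S_min_F_min_edge:
  "e \<in> events n m \<Longrightarrow> i < n \<Longrightarrow> (e, F_min m S1 S2 e i) \<in> S_min n m S1 S2"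
  unfolding S_min_def by blast

lemma cuts_S_min_subset:
  assumes "S1 \<subseteq> events n m \<times> events n m"
  shows "cuts (events n m) (S_min n m S1 S2) \<subseteq> cuts (events n m) S1"
proof
  fix D assume "D \<in> cuts (events n m) (S_min n m S1 S2)"
  then have cut: "consistent_cut (events n m) (S_min n m S1 S2) D" by (simp add: cuts_def)
  have "u \<in> D" if "(u, (i,k)) \<in> S1" "(i,k) \<in> D" for u i k
  proof -
    have "u \<in> events n m" "i < n" "k \<le> m i" using that(1) assms by (auto simp: events_def)
    then have "snd (F_reach m S1 u i) \<le> k" using that(1) F_reach_least by blast
    then have "F_min m S1 S2 u i \<in> D"
      using cut_closed_along_process[OF cut S_min_process_edge that(2)] by (simp add: F_min_def)
    then show "u \<in> D"
      using consistent_cut_edge[OF cut S_min_F_min_edge[OF \<open>u \<in> events n m\<close> \<open>i < n\<close>]] by blast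
  qed
  then show "D \<in> cuts (events n m) S1" using cut by (auto simp: cuts_def consistent_cut_def)
qed

lemma cuts_S_min_supset:
  assumes comp: "computation n m R"
    and "S1 \<subseteq> events n m \<times> events n m" "cuts (events n m) S1 \<subseteq> cuts (events n m) R"
    and "S2 \<subseteq> events n m \<times> events n m" "cuts (events n m) S2 \<subseteq> cuts (events n m) R"
  shows "cuts (events n m) S1 \<inter> cuts (events n m) S2 \<subseteq> cuts (events n m) (S_min n m S1 S2)"
proof
  fix D assume "D \<in> cuts (events n m) S1 \<inter> cuts (events n m) S2"
  then have cut1: "consistent_cut (events n m) S1 D" and cut2: "consistent_cut (events n m) S2 D"
    by (auto simp: cuts_def)
  have "u \<in> D" if "(u,v) \<in> S_min n m S1 S2" "v \<in> D" for u v
  proof -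
    from that(1) consider "v = succ_ev u"
      | i where "u \<in> events n m" "i < n" "v = F_min m S1 S2 u i"
      unfolding S_min_def by blast
    then show "u \<in> D"
    proof cases
      case 1
      obtain i k where "u = (i,k)" by fastforce
      moreover have "consistent_cut (events n m) R D" using assms(3) cut1 by (auto simp: cuts_def)
      ultimately show ?thesis
        using computation_cut_closed_along_process[OF comp] 1 \<open>v \<in> D\<close> by (auto simp: succ_ev_def)
    next
      case 2
      then have "v = F_reach m S1 u i \<or> v = F_reach m S2 u i" using F_min_cases by simp
      then show ?thesis
        using cut_F_reach_closed[OF comp assms(2,3) cut1 2(1,2)] \<open>v \<in> D\<close>
          cut_F_reach_closed[OF comp assms(4,5) cut2 2(1,2)] by blast
    qed
  qed
  then show "D \<in> cuts (events n m) (S_min n m S1 S2)"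
    using cut1 by (auto simp: cuts_def consistent_cut_def)
qed

theorem theorem14:
  assumes "computation n m R"
    and "regular (events n m) R b1"
    and "regular (events n m) R b2"
    and "is_slice (events n m) R b1 S1"
    and "is_slice (events n m) R b2 S2"
    and "is_slice (events n m) R (\<lambda>C. b1 C \<and> b2 C) S"
  shows "cuts (events n m) (S_min n m S1 S2) = cuts (events n m) S"
proof -
  have "regular (events n m) R (\<lambda>C. b1 C \<and> b2 C)"
    using assms(2,3) by (simp add: regular_def)
  then have cuts_S: "cuts (events n m) S = cuts (events n m) S1 \<inter> cuts (events n m) S2"
    using slice_cuts[OF finite_events] assms(2-6) by blast
  have S1: "S1 \<subseteq> events n m \<times> events n m" "cuts (events n m) S1 \<subseteq> cuts (events n m) R"
    using assms(4) computation_slice_cuts_subset[OF assms(1,2,4)] by (auto simp: is_slice_def)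
  have S2: "S2 \<subseteq> events n m \<times> events n m" "cuts (events n m) S2 \<subseteq> cuts (events n m) R"
    using assms(5) computation_slice_cuts_subset[OF assms(1,3,5)] by (auto simp: is_slice_def)
  show ?thesis
  proof
    show "cuts (events n m) (S_min n m S1 S2) \<subseteq> cuts (events n m) S"
      using cuts_S_min_subset[OF S1(1), of S2] cuts_S_min_subset[OF S2(1), of S1]
      unfolding cuts_S S_min_commute[of n m S2] by blast
    show "cuts (events n m) S \<subseteq> cuts (events n m) (S_min n m S1 S2)"
      using cuts_S_min_supset[OF assms(1) S1 S2] cuts_S by simp
  qed
qed

end
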